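(* Let $n\ge1$, $\mathfrak g=sl(n+1,\mathbb C)$, $a\in\mathbb C$, $m(a)=-\tfrac12(a+n+1)$, and let $\rho_a$ be the representation of $\mathfrak g$ on $\mathcal P=\mathbb C[z_1,\dots,z_n]$ given, for $f\in\mathcal P$, $1\le k\le n$, $1\le i\ne j\le n$, by $\rho_a(H_k)f=m(a)f-z_k\partial_{z_k}f-\sum_{j}z_j\partial_{z_j}f$, $\rho_a(E_{1,k+1})f=-m(a)z_kf+z_k\sum_jz_j\partial_{z_j}f$, $\rho_a(E_{k+1,1})f=-\partial_{z_k}f$, $\rho_a(E_{i+1,j+1})f=-z_j\partial_{z_i}f$. Assume $\mathcal Q\neq(0)$ is a finite-dimensional subspace of $\mathcal P$ invariant under $\rho_a(X)$ for all $X\in\mathfrak g$. Then $m(a)$ is a non-negative integer, $\mathcal Q=\mathcal P_{m(a)}$, and the restriction of $\rho_a$ to $\mathcal Q$ coincides with $d\pi_{m(a)}$.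
   Context: $E_{ij}$ is the $(n+1)\times(n+1)$ matrix with $1$ in entry $(i,j)$ and $0$ elsewhere; $H_k=E_{k+1,k+1}-E_{11}$; the $H_k$ and $E_{ij}$ ($i\ne j$) form a basis of $\mathfrak g$. (Equivalently, $\rho_a(X)=W(i\tilde X+\tfrac12a\varphi_1(X))$ via the Weyl correspondence, but the formulas above determine $\rho_a$.) For an integer $m\ge0$, $\mathcal P_m$ is the space of complex polynomials on $\mathbb C^n$ of degree $\le m$, and $d\pi_m$ is the representation of $\mathfrak g$ on $\mathcal P_m$ given by $d\pi_m(H_k)f=mf-z_k\partial_{z_k}f-\sum_jz_j\partial_{z_j}f$, $d\pi_m(E_{1,k+1})f=-mz_kf+z_k\sum_jz_j\partial_{z_j}f$, $d\pi_m(E_{k+1,1})f=-\partial_{z_k}f$, $d\pi_m(E_{i+1,j+1})f=-z_j\partial_{z_i}f$ (this is the complexified differential of the representation $\pi_m$ of $SU(n+1)$ on $\mathcal P_m$, $(\pi_m(g)f)(z)=(bz^t+a)^mf(g^{-1}\cdot z)$ where $g^{-1}=\begin{pmatrix}a&b\\c&d\end{pmatrix}$ and $g\cdot z=(a+bz^t)^{-1}(c+dz^t)^t$). *)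

theory Defs
  imports Complex_Main
begin

text \<open>Polynomials in z_1..z_n are represented by their coefficient functions on
multi-indices alpha :: nat => nat (alpha k = exponent of z_k), with finite support and
only variables 1..n occurring.\<close>

type_synonym mindex = "nat \<Rightarrow> nat"
type_synonym cpoly = "mindex \<Rightarrow> complex"

definition valid_index :: "nat \<Rightarrow> mindex \<Rightarrow> bool" where
  "valid_index n \<alpha> \<longleftrightarrow> (\<forall>i. i \<notin> {1..n} \<longrightarrow> \<alpha> i = 0)"

definition polys :: "nat \<Rightarrow> cpoly set" where
  "polys n = {f. finite {\<alpha>. f \<alpha> \<noteq> 0} \<and> (\<forall>\<alpha>. f \<alpha> \<noteq> 0 \<longrightarrow> valid_index n \<alpha>)}"

definition total_deg :: "nat \<Rightarrow> mindex \<Rightarrow> nat" where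
  "total_deg n \<alpha> = (\<Sum>i\<in>{1..n}. \<alpha> i)"

definition polys_deg :: "nat \<Rightarrow> nat \<Rightarrow> cpoly set" where
  "polys_deg n m = {f \<in> polys n. \<forall>\<alpha>. f \<alpha> \<noteq> 0 \<longrightarrow> total_deg n \<alpha> \<le> m}"

definition mulz :: "nat \<Rightarrow> cpoly \<Rightarrow> cpoly" where
  "mulz k f = (\<lambda>\<alpha>. if \<alpha> k = 0 then 0 else f (\<alpha>(k := \<alpha> k - 1)))"

definition dz :: "nat \<Rightarrow> cpoly \<Rightarrow> cpoly" where
  "dz k f = (\<lambda>\<alpha>. of_nat (\<alpha> k + 1) * f (\<alpha>(k := \<alpha> k + 1)))"

definition euler :: "nat \<Rightarrow> cpoly \<Rightarrow> cpoly" where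
  "euler n f = (\<lambda>\<alpha>. \<Sum>j\<in>{1..n}. mulz j (dz j f) \<alpha>)"

definition opH :: "nat \<Rightarrow> complex \<Rightarrow> nat \<Rightarrow> cpoly \<Rightarrow> cpoly" where
  "opH n c k f = (\<lambda>\<alpha>. c * f \<alpha> - mulz k (dz k f) \<alpha> - euler n f \<alpha>)"

definition opE1 :: "nat \<Rightarrow> complex \<Rightarrow> nat \<Rightarrow> cpoly \<Rightarrow> cpoly" where
  "opE1 n c k f = (\<lambda>\<alpha>. - c * mulz k f \<alpha> + mulz k (euler n f) \<alpha>)"

definition opE1' :: "nat \<Rightarrow> cpoly \<Rightarrow> cpoly" where
  "opE1' k f = (\<lambda>\<alpha>. - dz k f \<alpha>)"

definition opEij :: "nat \<Rightarrow> nat \<Rightarrow> cpoly \<Rightarrow> cpoly" where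
  "opEij i j f = (\<lambda>\<alpha>. - mulz j (dz i f) \<alpha>)"

text \<open>sl(n+1,C): (n+1)x(n+1) complex matrices, indices 1..n+1, trace zero.\<close>
definition sl :: "nat \<Rightarrow> (nat \<Rightarrow> nat \<Rightarrow> complex) set" where
  "sl n = {X. (\<forall>i j. (i \<notin> {1..n+1} \<or> j \<notin> {1..n+1}) \<longrightarrow> X i j = 0)
              \<and> (\<Sum>i\<in>{1..n+1}. X i i) = 0}"

text \<open>Extension by linearity from the basis H_k, E_ij (i \<noteq> j):
X = sum_k X_(k+1,k+1) H_k + sum_(i\<noteq>j) X_ij E_ij for traceless X.\<close>
definition gen_rep :: "nat \<Rightarrow> complex \<Rightarrow> (nat \<Rightarrow> nat \<Rightarrow> complex) \<Rightarrow> cpoly \<Rightarrow> cpoly" where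
  "gen_rep n c X f = (\<lambda>\<alpha>.
      (\<Sum>k\<in>{1..n}. X (k+1) (k+1) * opH n c k f \<alpha>)
    + (\<Sum>k\<in>{1..n}. X 1 (k+1) * opE1 n c k f \<alpha>)
    + (\<Sum>k\<in>{1..n}. X (k+1) 1 * opE1' k f \<alpha>)
    + (\<Sum>i\<in>{1..n}. \<Sum>j\<in>{1..n}. if i = j then 0 else X (i+1) (j+1) * opEij i j f \<alpha>))"

definition m_of :: "nat \<Rightarrow> complex \<Rightarrow> complex" where
  "m_of n a = - (a + of_nat n + 1) / 2"

definition rho :: "nat \<Rightarrow> complex \<Rightarrow> (nat \<Rightarrow> nat \<Rightarrow> complex) \<Rightarrow> cpoly \<Rightarrow> cpoly" where
  "rho n a = gen_rep n (m_of n a)"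

definition dpi :: "nat \<Rightarrow> nat \<Rightarrow> (nat \<Rightarrow> nat \<Rightarrow> complex) \<Rightarrow> cpoly \<Rightarrow> cpoly" where
  "dpi n m = gen_rep n (of_nat m)"

definition is_subspace :: "nat \<Rightarrow> cpoly set \<Rightarrow> bool" where
  "is_subspace n Q \<longleftrightarrow> Q \<subseteq> polys n \<and> (\<lambda>_. 0) \<in> Q
     \<and> (\<forall>f\<in>Q. \<forall>g\<in>Q. (\<lambda>\<alpha>. f \<alpha> + g \<alpha>) \<in> Q)
     \<and> (\<forall>c::complex. \<forall>f\<in>Q. (\<lambda>\<alpha>. c * f \<alpha>) \<in> Q)"

definition fin_dim :: "cpoly set \<Rightarrow> bool" where
  "fin_dim Q \<longleftrightarrow> (\<exists>B. finite B \<and> B \<subseteq> Q \<and>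
      (\<forall>f\<in>Q. \<exists>c :: cpoly \<Rightarrow> complex. f = (\<lambda>\<alpha>. \<Sum>b\<in>B. c b * b \<alpha>)))"

end

theory Submission
  imports Defs
begin

text \<open>The lowering operators \<open>\<rho>(E\<^sub>k\<^sub>+\<^sub>1\<^sub>,\<^sub>1) = -\<partial>\<^sub>k\<close> take any nonzero invariant
subspace down to the constants. The raising operator \<open>\<rho>(E\<^sub>1\<^sub>,\<^sub>k\<^sub>+\<^sub>1)\<close> multiplies the top
homogeneous part of a polynomial of degree \<open>d\<close> by \<open>(d - c) z\<^sub>k\<close>, with \<open>c = m(a)\<close>. Since the
degrees in a finite-dimensional subspace are bounded, raising must eventually kill the top
part, which forces \<open>c = m\<close> for some natural number \<open>m\<close> at least the degree of every element.
Conversely, starting from the constant \<open>1\<close>, the raising operators produce every monomial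
of degree at most \<open>m\<close> up to the nonzero factors \<open>d - m\<close>, so the subspace is exactly
\<open>\<P>\<^sub>m\<close>. With \<open>c = m\<close> the operators of \<open>\<rho>\<^sub>a\<close> and \<open>d\<pi>\<^sub>m\<close> are literally the same.\<close>

definition poly_degree :: "nat \<Rightarrow> cpoly \<Rightarrow> nat \<Rightarrow> bool" where
  "poly_degree n f d \<longleftrightarrow>
     (\<exists>\<alpha>. f \<alpha> \<noteq> 0 \<and> total_deg n \<alpha> = d) \<and> (\<forall>\<beta>. f \<beta> \<noteq> 0 \<longrightarrow> total_deg n \<beta> \<le> d)"

definition monomial :: "mindex \<Rightarrow> cpoly" where
  "monomial \<beta> = (\<lambda>\<alpha>. if \<alpha> = \<beta> then 1 else 0)"

definition matrix_unit :: "nat \<Rightarrow> nat \<Rightarrow> nat \<Rightarrow> nat \<Rightarrow> complex" where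
  "matrix_unit i j = (\<lambda>r s. if r = i \<and> s = j then 1 else 0)"

lemma total_deg_fun_upd_Suc:
  assumes "k \<in> {1..n}"
  shows "total_deg n (\<alpha>(k := \<alpha> k + 1)) = total_deg n \<alpha> + 1"
proof -
  have "(\<Sum>i\<in>{1..n}. (\<alpha>(k := \<alpha> k + 1)) i) = (\<Sum>i\<in>{1..n}. \<alpha> i + (if i = k then 1 else 0))"
    by (rule sum.cong) auto
  then show ?thesis
    using assms by (simp add: total_deg_def sum.distrib)
qed

lemma total_deg_pos_imp_index:
  assumes "total_deg n \<alpha> \<noteq> 0"
  obtains k where "k \<in> {1..n}" "\<alpha> k \<noteq> 0"
  using assms that unfolding total_deg_def by (metis sum.neutral)

lemma total_deg_eq_0_imp_zero:
  assumes "valid_index n \<alpha>" "total_deg n \<alpha> = 0"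
  shows "\<alpha> = (\<lambda>_. 0)"
  using assms by (fastforce simp: total_deg_def valid_index_def)

lemma fun_upd_Suc_decomp:
  fixes \<alpha> \<gamma> :: mindex
  assumes "\<gamma> = \<alpha>(k := \<alpha> k - 1)" "\<alpha> k \<noteq> 0"
  shows "\<alpha> = \<gamma>(k := \<gamma> k + 1)"
  unfolding assms(1) using assms(2) by (simp add: fun_eq_iff)

lemma mulz_dz: "mulz k (dz k f) \<alpha> = of_nat (\<alpha> k) * f \<alpha>"
  by (auto simp: mulz_def dz_def)

lemma euler_apply: "euler n f \<alpha> = of_nat (total_deg n \<alpha>) * f \<alpha>"
  by (simp add: euler_def total_deg_def mulz_dz sum_distrib_right)

lemma opE1_fun_upd_Suc:
  "opE1 n c k f (\<alpha>(k := \<alpha> k + 1)) = (of_nat (total_deg n \<alpha>) - c) * f \<alpha>"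
  by (simp add: opE1_def mulz_def euler_apply algebra_simps)

lemma opE1_eq_0: "\<alpha> k = 0 \<Longrightarrow> opE1 n c k f \<alpha> = 0"
  by (simp add: opE1_def mulz_def)

lemma opE1_monomial:
  "opE1 n c k (monomial \<gamma>) =
     (\<lambda>\<alpha>. (of_nat (total_deg n \<gamma>) - c) * monomial (\<gamma>(k := \<gamma> k + 1)) \<alpha>)"
proof
  fix \<alpha>
  show "opE1 n c k (monomial \<gamma>) \<alpha> = (of_nat (total_deg n \<gamma>) - c) * monomial (\<gamma>(k := \<gamma> k + 1)) \<alpha>"
  proof (cases "\<alpha> k = 0")
    case True
    then show ?thesis by (auto simp: opE1_eq_0 monomial_def)
  next
    case False
    define \<delta> where "\<delta> = \<alpha>(k := \<alpha> k - 1)"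
    have \<alpha>: "\<alpha> = \<delta>(k := \<delta> k + 1)"
      using fun_upd_Suc_decomp[OF \<delta>_def False] .
    have "(\<delta>(k := \<delta> k + 1) = \<gamma>(k := \<gamma> k + 1)) = (\<delta> = \<gamma>)"
      by (metis add_right_cancel fun_upd_idem_iff fun_upd_same fun_upd_upd)
    then show ?thesis
      unfolding \<alpha> opE1_fun_upd_Suc by (auto simp: monomial_def)
  qed
qed

lemma poly_degree_opE1:
  assumes k: "k \<in> {1..n}" and f: "poly_degree n f d" and dc: "of_nat d \<noteq> c"
  shows "poly_degree n (opE1 n c k f) (d + 1)"
proof -
  obtain \<alpha> where \<alpha>: "f \<alpha> \<noteq> 0" "total_deg n \<alpha> = d"
    using f by (auto simp: poly_degree_def)
  have top: "opE1 n c k f (\<alpha>(k := \<alpha> k + 1)) \<noteq> 0"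
    unfolding opE1_fun_upd_Suc using \<alpha> dc by simp
  have bound: "total_deg n \<beta> \<le> d + 1" if \<beta>: "opE1 n c k f \<beta> \<noteq> 0" for \<beta>
  proof -
    have "\<beta> k \<noteq> 0" using \<beta> opE1_eq_0 by blast
    define \<gamma> where "\<gamma> = \<beta>(k := \<beta> k - 1)"
    have \<beta>\<gamma>: "\<beta> = \<gamma>(k := \<gamma> k + 1)"
      using fun_upd_Suc_decomp[OF \<gamma>_def \<open>\<beta> k \<noteq> 0\<close>] .
    have "f \<gamma> \<noteq> 0" using \<beta> unfolding \<beta>\<gamma> opE1_fun_upd_Suc by simp
    then have "total_deg n \<gamma> \<le> d" using f by (auto simp: poly_degree_def)
    then show ?thesis unfolding \<beta>\<gamma> total_deg_fun_upd_Suc[OF k] by simp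
  qed
  show ?thesis
    using top bound \<alpha> total_deg_fun_upd_Suc[OF k] by (auto simp: poly_degree_def)
qed

lemma poly_degree_dz:
  assumes f: "poly_degree n f (Suc d)"
  obtains k where "k \<in> {1..n}" "poly_degree n (dz k f) d"
proof -
  obtain \<alpha> where \<alpha>: "f \<alpha> \<noteq> 0" "total_deg n \<alpha> = Suc d"
    using f by (auto simp: poly_degree_def)
  obtain k where k: "k \<in> {1..n}" "\<alpha> k \<noteq> 0"
    using total_deg_pos_imp_index[of n \<alpha>] \<alpha>(2) by auto
  define \<gamma> where "\<gamma> = \<alpha>(k := \<alpha> k - 1)"
  have \<alpha>\<gamma>: "\<alpha> = \<gamma>(k := \<gamma> k + 1)"
    using fun_upd_Suc_decomp[OF \<gamma>_def k(2)] .
  have "dz k f \<gamma> = of_nat (\<alpha> k) * f \<alpha>"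
    using k(2) by (simp add: dz_def \<gamma>_def)
  then have "dz k f \<gamma> \<noteq> 0"
    using \<alpha>(1) k(2) by simp
  moreover have "total_deg n \<gamma> = d"
    using \<alpha>(2) unfolding \<alpha>\<gamma> total_deg_fun_upd_Suc[OF k(1)] by simp
  moreover have "total_deg n \<beta> \<le> d" if "dz k f \<beta> \<noteq> 0" for \<beta>
  proof -
    have "f (\<beta>(k := \<beta> k + 1)) \<noteq> 0" using that by (simp add: dz_def)
    then have "total_deg n (\<beta>(k := \<beta> k + 1)) \<le> Suc d"
      using f by (auto simp: poly_degree_def)
    then show ?thesis unfolding total_deg_fun_upd_Suc[OF k(1)] by simp
  qed
  ultimately have "poly_degree n (dz k f) d"
    unfolding poly_degree_def by blast
  with k(1) show ?thesis by (rule that)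
qed

lemma poly_degree_exists:
  assumes "f \<in> polys n" "f \<noteq> (\<lambda>_. 0)"
  obtains d where "poly_degree n f d"
proof -
  let ?S = "{\<alpha>. f \<alpha> \<noteq> 0}"
  have "finite ?S" "?S \<noteq> {}" using assms by (auto simp: polys_def)
  then have "Max (total_deg n ` ?S) \<in> total_deg n ` ?S"
    by simp
  then have "poly_degree n f (Max (total_deg n ` ?S))"
    using \<open>finite ?S\<close> by (auto simp: poly_degree_def)
  then show ?thesis using that by blast
qed

lemma poly_eq_sum_monomials:
  assumes "f \<in> polys n"
  shows "f = (\<lambda>\<alpha>. \<Sum>\<beta>\<in>{\<beta>. f \<beta> \<noteq> 0}. f \<beta> * monomial \<beta> \<alpha>)"
proof
  fix \<alpha>
  have fin: "finite {\<beta>. f \<beta> \<noteq> 0}" using assms by (simp add: polys_def)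
  have "(\<Sum>\<beta>\<in>{\<beta>. f \<beta> \<noteq> 0}. f \<beta> * monomial \<beta> \<alpha>) = (\<Sum>\<beta>\<in>{\<beta>. f \<beta> \<noteq> 0}. if \<alpha> = \<beta> then f \<beta> else 0)"
    by (rule sum.cong) (auto simp: monomial_def)
  also have "\<dots> = f \<alpha>" using fin by (simp add: sum.delta)
  finally show "f \<alpha> = (\<Sum>\<beta>\<in>{\<beta>. f \<beta> \<noteq> 0}. f \<beta> * monomial \<beta> \<alpha>)" ..
qed

lemma fin_dim_degree_bounded:
  assumes "fin_dim Q" "Q \<subseteq> polys n"
  obtains D where "\<And>f \<alpha>. f \<in> Q \<Longrightarrow> f \<alpha> \<noteq> 0 \<Longrightarrow> total_deg n \<alpha> \<le> D"
proof -
  obtain B where B: "finite B" "B \<subseteq> Q" "\<forall>f\<in>Q. \<exists>c :: cpoly \<Rightarrow> complex. f = (\<lambda>\<alpha>. \<Sum>b\<in>B. c b * b \<alpha>)"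
    using assms(1) by (auto simp: fin_dim_def)
  define S where "S = (\<Union>b\<in>B. {\<alpha>. b \<alpha> \<noteq> 0})"
  have "finite S" unfolding S_def using B assms(2) by (auto simp: polys_def)
  have "total_deg n \<alpha> \<le> (\<Sum>\<gamma>\<in>S. total_deg n \<gamma>)" if f: "f \<in> Q" "f \<alpha> \<noteq> 0" for f \<alpha>
  proof -
    obtain cf where "f = (\<lambda>\<alpha>. \<Sum>b\<in>B. cf b * b \<alpha>)" using B(3) f(1) by blast
    then have "(\<Sum>b\<in>B. cf b * b \<alpha>) \<noteq> 0" using f(2) by metis
    then obtain b where "b \<in> B" "b \<alpha> \<noteq> 0" by (metis (no_types, lifting) mult_zero_right sum.neutral)
    then have "\<alpha> \<in> S" by (auto simp: S_def)
    then show ?thesis using \<open>finite S\<close> by (simp add: member_le_sum)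
  qed
  then show ?thesis by (rule that)
qed

lemma is_subspace_sum:
  assumes "is_subspace n Q" "finite A" "\<And>b. b \<in> A \<Longrightarrow> h b \<in> Q"
  shows "(\<lambda>\<alpha>. \<Sum>b\<in>A. h b \<alpha>) \<in> Q"
  using assms(2,3)
proof (induction A rule: finite_induct)
  case empty
  then show ?case using assms(1) by (simp add: is_subspace_def)
next
  case (insert x F)
  then show ?case using assms(1) unfolding is_subspace_def by simp
qed

lemma matrix_unit_in_sl:
  assumes "i \<in> {1..n+1}" "j \<in> {1..n+1}" "i \<noteq> j"
  shows "matrix_unit i j \<in> sl n"
  using assms by (auto simp: sl_def matrix_unit_def intro!: sum.neutral)

lemma gen_rep_matrix_unit_first_row:
  "k \<in> {1..n} \<Longrightarrow> gen_rep n c (matrix_unit 1 (k + 1)) f = opE1 n c k f"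
  by (auto simp: gen_rep_def matrix_unit_def fun_eq_iff if_distrib if_distribR sum.delta cong: if_cong)

lemma gen_rep_matrix_unit_first_column:
  "k \<in> {1..n} \<Longrightarrow> gen_rep n c (matrix_unit (k + 1) 1) f = opE1' k f"
  by (auto simp: gen_rep_def matrix_unit_def fun_eq_iff if_distrib if_distribR sum.delta cong: if_cong)

locale invariant_subspace =
  fixes n :: nat and c :: complex and Q :: "cpoly set"
  assumes subspace: "is_subspace n Q"
    and invariant: "\<And>X f. X \<in> sl n \<Longrightarrow> f \<in> Q \<Longrightarrow> gen_rep n c X f \<in> Q"
begin

lemma subset_polys: "Q \<subseteq> polys n"
  using subspace by (simp add: is_subspace_def)

lemma scale_mem: "f \<in> Q \<Longrightarrow> (\<lambda>\<alpha>. d * f \<alpha>) \<in> Q"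
  using subspace by (simp add: is_subspace_def)

lemma opE1_mem:
  assumes "k \<in> {1..n}" "f \<in> Q"
  shows "opE1 n c k f \<in> Q"
proof -
  have "gen_rep n c (matrix_unit 1 (k + 1)) f \<in> Q"
    using assms by (intro invariant matrix_unit_in_sl) auto
  then show ?thesis using gen_rep_matrix_unit_first_row[OF assms(1)] by simp
qed

lemma dz_mem:
  assumes "k \<in> {1..n}" "f \<in> Q"
  shows "dz k f \<in> Q"
proof -
  have "gen_rep n c (matrix_unit (k + 1) 1) f \<in> Q"
    using assms by (intro invariant matrix_unit_in_sl) auto
  then have "opE1' k f \<in> Q" using gen_rep_matrix_unit_first_column[OF assms(1)] by simp
  from scale_mem[OF this, of "-1"] show ?thesis by (simp add: opE1'_def)
qed

lemma exists_degree_0: "f \<in> Q \<Longrightarrow> poly_degree n f d \<Longrightarrow> \<exists>g\<in>Q. poly_degree n g 0"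
proof (induction d arbitrary: f)
  case (Suc d)
  then show ?case using poly_degree_dz dz_mem by metis
qed auto

lemma monomial_0_mem:
  assumes f: "f \<in> Q" "f \<noteq> (\<lambda>_. 0)"
  shows "monomial (\<lambda>_. 0) \<in> Q"
proof -
  obtain d where "poly_degree n f d" using poly_degree_exists f subset_polys by blast
  then obtain g where g: "g \<in> Q" "poly_degree n g 0" using exists_degree_0 f by blast
  have supp: "g \<beta> \<noteq> 0 \<Longrightarrow> \<beta> = (\<lambda>_. 0)" for \<beta>
    using g subset_polys total_deg_eq_0_imp_zero
    by (fastforce simp: poly_degree_def polys_def)
  then have g0: "g (\<lambda>_. 0) \<noteq> 0" using g by (auto simp: poly_degree_def)
  have "(\<lambda>\<beta>. (1 / g (\<lambda>_. 0)) * g \<beta>) = monomial (\<lambda>_. 0)"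
  proof
    fix \<beta>
    show "1 / g (\<lambda>_. 0) * g \<beta> = monomial (\<lambda>_. 0) \<beta>"
      using supp[of \<beta>] g0 by (cases "g \<beta> = 0") (auto simp: monomial_def)
  qed
  then show ?thesis using scale_mem[OF g(1)] by metis
qed

lemma poly_degree_unbounded:
  assumes "n \<ge> 1" "g \<in> Q" "poly_degree n g d" "\<And>i. i \<ge> d \<Longrightarrow> of_nat i \<noteq> c"
  shows "\<exists>h\<in>Q. poly_degree n h (d + j)"
proof (induction j)
  case (Suc j)
  then obtain h where h: "h \<in> Q" "poly_degree n h (d + j)" by blast
  have one: "1 \<in> {1..n}" using assms(1) by simp
  have "opE1 n c 1 h \<in> Q" using opE1_mem[OF one h(1)] .
  moreover have "of_nat (d + j) \<noteq> c" using assms(4)[of "d + j"] by linarith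
  then have "poly_degree n (opE1 n c 1 h) (d + j + 1)"
    using poly_degree_opE1[OF one h(2)] by blast
  ultimately show ?case by auto
qed (use assms in auto)

lemma parameter_nat_above_degree:
  assumes "n \<ge> 1" "fin_dim Q" "g \<in> Q" "poly_degree n g d"
  shows "\<exists>i\<ge>d. c = of_nat i"
proof (rule ccontr)
  assume not_nat: "\<not> (\<exists>i\<ge>d. c = of_nat i)"
  obtain D where D: "\<And>f \<alpha>. f \<in> Q \<Longrightarrow> f \<alpha> \<noteq> 0 \<Longrightarrow> total_deg n \<alpha> \<le> D"
    using fin_dim_degree_bounded assms(2) subset_polys by blast
  obtain h where "h \<in> Q" "poly_degree n h (d + (D + 1))"
    using poly_degree_unbounded[OF assms(1,3,4)] not_nat by metis
  then show False using D by (fastforce simp: poly_degree_def)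
qed

lemma subset_polys_deg:
  assumes "n \<ge> 1" "fin_dim Q" "c = of_nat m"
  shows "Q \<subseteq> polys_deg n m"
proof
  fix g assume g: "g \<in> Q"
  have "total_deg n \<alpha> \<le> m" if "g \<alpha> \<noteq> 0" for \<alpha>
  proof -
    have "g \<in> polys n" "g \<noteq> (\<lambda>_. 0)" using g subset_polys that by auto
    then obtain d where d: "poly_degree n g d" by (rule poly_degree_exists)
    then have "total_deg n \<alpha> \<le> d" using that by (auto simp: poly_degree_def)
    moreover obtain i where "i \<ge> d" "c = of_nat i"
      using parameter_nat_above_degree[OF assms(1,2) g d] by blast
    ultimately show ?thesis using assms(3) by simp
  qed
  then show "g \<in> polys_deg n m" using g subset_polys by (auto simp: polys_deg_def)
qed

lemma monomial_mem:
  assumes "c = of_nat m" "monomial (\<lambda>_. 0) \<in> Q"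
  shows "valid_index n \<beta> \<Longrightarrow> total_deg n \<beta> = d \<Longrightarrow> d \<le> m \<Longrightarrow> monomial \<beta> \<in> Q"
proof (induction d arbitrary: \<beta>)
  case 0
  then have "\<beta> = (\<lambda>_. 0)" by (intro total_deg_eq_0_imp_zero)
  then show ?case using assms(2) by simp
next
  case (Suc d)
  obtain k where k: "k \<in> {1..n}" "\<beta> k \<noteq> 0"
    using total_deg_pos_imp_index[of n \<beta>] Suc.prems(2) by auto
  define \<gamma> where "\<gamma> = \<beta>(k := \<beta> k - 1)"
  have \<beta>\<gamma>: "\<beta> = \<gamma>(k := \<gamma> k + 1)"
    using fun_upd_Suc_decomp[OF \<gamma>_def k(2)] .
  have "valid_index n \<gamma>" using Suc.prems(1) by (auto simp: valid_index_def \<gamma>_def)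
  moreover have \<gamma>d: "total_deg n \<gamma> = d"
    using Suc.prems(2) unfolding \<beta>\<gamma> total_deg_fun_upd_Suc[OF k(1)] by simp
  ultimately have "monomial \<gamma> \<in> Q" using Suc by simp
  moreover have "opE1 n c k (monomial \<gamma>) = (\<lambda>\<alpha>. (of_nat d - c) * monomial \<beta> \<alpha>)"
    unfolding opE1_monomial \<gamma>d \<beta>\<gamma>[symmetric] by (rule refl)
  ultimately have "(\<lambda>\<alpha>. (of_nat d - c) * monomial \<beta> \<alpha>) \<in> Q"
    using opE1_mem[OF k(1)] by metis
  from scale_mem[OF this, of "1 / (of_nat d - c)"] show ?case
    using assms(1) Suc.prems(3) by simp
qed

lemma polys_deg_subset:
  assumes "c = of_nat m" "monomial (\<lambda>_. 0) \<in> Q"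
  shows "polys_deg n m \<subseteq> Q"
proof
  fix g assume g: "g \<in> polys_deg n m"
  then have "g \<in> polys n" "finite {\<beta>. g \<beta> \<noteq> 0}" by (auto simp: polys_deg_def polys_def)
  have "monomial \<beta> \<in> Q" if "g \<beta> \<noteq> 0" for \<beta>
    using monomial_mem[OF assms] g that by (auto simp: polys_deg_def polys_def)
  then have "(\<lambda>\<alpha>. \<Sum>\<beta>\<in>{\<beta>. g \<beta> \<noteq> 0}. g \<beta> * monomial \<beta> \<alpha>) \<in> Q"
    using is_subspace_sum[OF subspace \<open>finite _\<close>] scale_mem by simp
  then show "g \<in> Q" using poly_eq_sum_monomials[OF \<open>g \<in> polys n\<close>] by simp
qed

end

theorem proposition8p3:
  fixes n :: nat and a :: complex and Q :: "cpoly set"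
  assumes "n \<ge> 1"
    and "is_subspace n Q"
    and "fin_dim Q"
    and "Q \<noteq> {\<lambda>_. 0}"
    and "\<forall>X\<in>sl n. \<forall>f\<in>Q. rho n a X f \<in> Q"
  shows "\<exists>m::nat. m_of n a = of_nat m \<and> Q = polys_deg n m
           \<and> (\<forall>X\<in>sl n. \<forall>f\<in>Q. rho n a X f = dpi n m X f)"
proof -
  interpret invariant_subspace n "m_of n a" Q
    using assms(2,5) by unfold_locales (auto simp: rho_def)
  have "(\<lambda>_. 0) \<in> Q" using assms(2) by (simp add: is_subspace_def)
  then obtain f where "f \<in> Q" "f \<noteq> (\<lambda>_. 0)" using assms(4) by blast
  then have one: "monomial (\<lambda>_. 0) \<in> Q" by (rule monomial_0_mem)
  have "poly_degree n (monomial (\<lambda>_. 0)) 0"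
    by (auto simp: poly_degree_def monomial_def total_deg_def)
  then obtain m where m: "m_of n a = of_nat m"
    using parameter_nat_above_degree[OF assms(1,3) one] by blast
  have "Q = polys_deg n m"
    using subset_polys_deg[OF assms(1,3) m] polys_deg_subset[OF m one] by (rule subset_antisym)
  moreover have "rho n a = dpi n m" by (simp add: rho_def dpi_def m)
  ultimately show ?thesis using m by (intro exI[of _ m]) simp
qed

end
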